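(* Let $A\in SL_3(\mathfrak{o})$. Then there exist $y_1,y_2,y_3\in Y(\mathfrak{o})$, $d\in D(3)$, $u\in U(3)$ and $C\in\Gamma_\infty(3)$ such that $$A=\varphi_2(y_1^{-1})\,\varphi_1(y_2^{-1})\,\varphi_2(y_3^{-1})\,d\,u\,C.$$
   Context: Let $\omega=e^{2\pi i/3}$, $\mathfrak{o}=\mathbb{Z}[\omega]$ (a PID), $\mathfrak{o}^\times=\{\pm1,\pm\omega,\pm\omega^2\}$. Fix a set of representatives of the nonzero elements of $\mathfrak{o}$ modulo multiplication by units (e.g. the $z\neq0$ with $0\le\arg z<\pi/3$); "$c\in(\mathfrak{o}-\{0\})/\mathfrak{o}^\times$" means $c$ is one of these representatives. For each nonzero $c$ fix a set of representatives of $\mathfrak{o}/c\mathfrak{o}$; "$a\in\mathfrak{o}/c\mathfrak{o}$" means $a$ belongs to this set. $Y(\mathfrak{o})=\{\begin{pmatrix}a&b\\c&d\end{pmatrix}\in SL_2(\mathfrak{o}) : c\in(\mathfrak{o}-\{0\})/\mathfrak{o}^\times,\ a\in\mathfrak{o}/c\mathfrak{o}\}\cup\{I_2\}$. $\Gamma(3)=\{A\in SL_3(\mathfrak{o}):A\equiv I_3\pmod{3\mathfrak{o}}\}$ (entrywise) and $\Gamma_\infty(3)$ is its subgroup of upper triangular unipotent matrices. $D(3)$ is the set of diagonal matrices $\mathrm{diag}(i,j,k)$ with $i,j,k\in\mathfrak{o}$, $ijk=1$. $U(3)$ is the set of matrices $\begin{pmatrix}1&\alpha&\beta\\&1&\gamma\\&&1\end{pmatrix}$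 with $\alpha,\beta,\gamma\in\{0,1,2\}+\{0,1,2\}\omega$. For $y=\begin{pmatrix}a&b\\c&d\end{pmatrix}\in SL_2(\mathfrak{o})$, $\varphi_1(y)=\begin{pmatrix}a&b&0\\c&d&0\\0&0&1\end{pmatrix}$ and $\varphi_2(y)=\begin{pmatrix}1&0&0\\0&a&b\\0&c&d\end{pmatrix}$. *)

theory Defs
  imports "HOL-Analysis.Analysis"
begin

definition omega :: complex where
  "omega = cis (2 * pi / 3)"

definition eis :: "complex set" where
  "eis = {of_int a + of_int b * omega | a b. True}"

definition eis_units :: "complex set" where
  "eis_units = {x \<in> eis. \<exists>y \<in> eis. x * y = 1}"

definition unit_reps :: "complex set \<Rightarrow> bool" where
  "unit_reps R \<longleftrightarrow> R \<subseteq> eis - {0} \<and>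
     (\<forall>z \<in> eis - {0}. \<exists>!r. r \<in> R \<and> (\<exists>u \<in> eis_units. z = u * r))"

definition residue_reps :: "complex \<Rightarrow> complex set \<Rightarrow> bool" where
  "residue_reps c S \<longleftrightarrow> S \<subseteq> eis \<and>
     (\<forall>x \<in> eis. \<exists>!s. s \<in> S \<and> (\<exists>k \<in> eis. x - s = c * k))"

definition SL2_eis :: "(complex^2^2) set" where
  "SL2_eis = {y. (\<forall>i j. y$i$j \<in> eis) \<and> det y = 1}"

definition SL3_eis :: "(complex^3^3) set" where
  "SL3_eis = {A. (\<forall>i j. A$i$j \<in> eis) \<and> det A = 1}"

definition mat2 :: "complex \<Rightarrow> complex \<Rightarrow> complex \<Rightarrow> complex \<Rightarrow> complex^2^2" where
  "mat2 a b c d = vector [vector [a, b], vector [c, d]]"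

definition mat3 :: "complex \<Rightarrow> complex \<Rightarrow> complex \<Rightarrow> complex \<Rightarrow> complex \<Rightarrow> complex
     \<Rightarrow> complex \<Rightarrow> complex \<Rightarrow> complex \<Rightarrow> complex^3^3" where
  "mat3 a11 a12 a13 a21 a22 a23 a31 a32 a33 =
     vector [vector [a11, a12, a13], vector [a21, a22, a23], vector [a31, a32, a33]]"

definition Yset :: "complex set \<Rightarrow> (complex \<Rightarrow> complex set) \<Rightarrow> (complex^2^2) set" where
  "Yset R S = {mat2 a b c d | a b c d. mat2 a b c d \<in> SL2_eis \<and> c \<in> R \<and> a \<in> S c}
              \<union> {mat 1}"

definition phi1 :: "complex^2^2 \<Rightarrow> complex^3^3" where
  "phi1 y = mat3 (y$1$1) (y$1$2) 0 (y$2$1) (y$2$2) 0 0 0 1"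

definition phi2 :: "complex^2^2 \<Rightarrow> complex^3^3" where
  "phi2 y = mat3 1 0 0 0 (y$1$1) (y$1$2) 0 (y$2$1) (y$2$2)"

definition Gamma3 :: "(complex^3^3) set" where
  "Gamma3 = {A \<in> SL3_eis. \<forall>i j. \<exists>k \<in> eis. A$i$j - (mat 1 :: complex^3^3)$i$j = 3 * k}"

definition Gamma_inf3 :: "(complex^3^3) set" where
  "Gamma_inf3 = {A \<in> Gamma3. \<exists>x y z. A = mat3 1 x y 0 1 z 0 0 1}"

definition D3 :: "(complex^3^3) set" where
  "D3 = {mat3 i 0 0 0 j 0 0 0 k | i j k. i \<in> eis \<and> j \<in> eis \<and> k \<in> eis \<and> i * j * k = 1}"

definition small_eis :: "complex set" where
  "small_eis = {of_int a + of_int b * omega | a b. a \<in> {0,1,2} \<and> b \<in> {0,1,2}}"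

definition U3 :: "(complex^3^3) set" where
  "U3 = {mat3 1 \<alpha> \<beta> 0 1 \<gamma> 0 0 1 | \<alpha> \<beta> \<gamma>. \<alpha> \<in> small_eis \<and> \<beta> \<in> small_eis \<and> \<gamma> \<in> small_eis}"

end

theory Submission
  imports Defs
begin

text \<open>The ring $\mathfrak{o}$ is norm-Euclidean: every complex number lies at distance less than 1
  from an Eisenstein integer. So for $p, q \in \mathfrak{o}$ the Euclidean algorithm produces a
  matrix in $SL_2(\mathfrak{o})$ whose bottom row $(c, d)$ satisfies $cp + dq = 0$; scaling by a unit
  and adjusting the top row modulo $c$ turns it into an element of $Y(\mathfrak{o})$. Multiplying by
  such matrices through $\varphi_2, \varphi_1, \varphi_2$ clears the entries $(3,1)$, $(2,1)$,
  $(3,2)$ of $A$ in turn. The resulting upper triangular matrix has diagonal entries with product 1,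
  so it is a diagonal matrix times a unipotent matrix over $\mathfrak{o}$, and reducing the entries
  of the latter modulo 3 splits it as an element of $U(3)$ times one of $\Gamma_\infty(3)$.\<close>

lemma mat2_nth [simp]:
  "mat2 a b c d $ 1 $ 1 = a" "mat2 a b c d $ 1 $ 2 = b"
  "mat2 a b c d $ 2 $ 1 = c" "mat2 a b c d $ 2 $ 2 = d"
  by (simp_all add: mat2_def)

lemma mat3_nth [simp]:
  "mat3 a11 a12 a13 a21 a22 a23 a31 a32 a33 $ 1 $ 1 = a11"
  "mat3 a11 a12 a13 a21 a22 a23 a31 a32 a33 $ 1 $ 2 = a12"
  "mat3 a11 a12 a13 a21 a22 a23 a31 a32 a33 $ 1 $ 3 = a13"
  "mat3 a11 a12 a13 a21 a22 a23 a31 a32 a33 $ 2 $ 1 = a21"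
  "mat3 a11 a12 a13 a21 a22 a23 a31 a32 a33 $ 2 $ 2 = a22"
  "mat3 a11 a12 a13 a21 a22 a23 a31 a32 a33 $ 2 $ 3 = a23"
  "mat3 a11 a12 a13 a21 a22 a23 a31 a32 a33 $ 3 $ 1 = a31"
  "mat3 a11 a12 a13 a21 a22 a23 a31 a32 a33 $ 3 $ 2 = a32"
  "mat3 a11 a12 a13 a21 a22 a23 a31 a32 a33 $ 3 $ 3 = a33"
  by (simp_all add: mat3_def)

lemma mat3_eq_iff:
  "mat3 a11 a12 a13 a21 a22 a23 a31 a32 a33 = mat3 b11 b12 b13 b21 b22 b23 b31 b32 b33 \<longleftrightarrow>
    a11 = b11 \<and> a12 = b12 \<and> a13 = b13 \<and> a21 = b21 \<and> a22 = b22 \<and> a23 = b23 \<and>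
    a31 = b31 \<and> a32 = b32 \<and> a33 = b33"
  by (auto simp add: vec_eq_iff forall_3)

lemma mat3_eta:
  "(A :: complex^3^3) = mat3 (A$1$1) (A$1$2) (A$1$3) (A$2$1) (A$2$2) (A$2$3) (A$3$1) (A$3$2) (A$3$3)"
  by (simp add: vec_eq_iff forall_3)

lemma mat3_mult:
  "mat3 a11 a12 a13 a21 a22 a23 a31 a32 a33 ** mat3 b11 b12 b13 b21 b22 b23 b31 b32 b33 =
    mat3 (a11*b11 + a12*b21 + a13*b31) (a11*b12 + a12*b22 + a13*b32) (a11*b13 + a12*b23 + a13*b33)
         (a21*b11 + a22*b21 + a23*b31) (a21*b12 + a22*b22 + a23*b32) (a21*b13 + a22*b23 + a23*b33)
         (a31*b11 + a32*b21 + a33*b31) (a31*b12 + a32*b22 + a33*b32) (a31*b13 + a32*b23 + a33*b33)"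
  by (simp add: vec_eq_iff forall_3 matrix_matrix_mult_def sum_3)

lemma det_mat3:
  "det (mat3 a11 a12 a13 a21 a22 a23 a31 a32 a33) =
    a11*a22*a33 + a12*a23*a31 + a13*a21*a32 - a11*a23*a32 - a12*a21*a33 - a13*a22*a31"
  by (simp add: det_3)

lemma matrix_inv_left: "invertible A \<Longrightarrow> matrix_inv A ** A = mat 1"
  unfolding invertible_def matrix_inv_def by (rule someI_ex[THEN conjunct2])

lemma phi1_mult: "phi1 (x ** y) = phi1 x ** phi1 y"
  unfolding phi1_def mat3_mult by (simp add: mat3_eq_iff matrix_matrix_mult_def sum_2)

lemma phi2_mult: "phi2 (x ** y) = phi2 x ** phi2 y"
  unfolding phi2_def mat3_mult by (simp add: mat3_eq_iff matrix_matrix_mult_def sum_2)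

lemma phi1_one: "phi1 (mat 1) = mat 1"
  by (simp add: phi1_def mat_def vec_eq_iff forall_3)

lemma phi2_one: "phi2 (mat 1) = mat 1"
  by (simp add: phi2_def mat_def vec_eq_iff forall_3)

lemma phi1_matrix_inv_cancel: "invertible y \<Longrightarrow> phi1 (matrix_inv y) ** (phi1 y ** X) = X"
  by (simp add: matrix_mul_assoc phi1_mult[symmetric] matrix_inv_left phi1_one)

lemma phi2_matrix_inv_cancel: "invertible y \<Longrightarrow> phi2 (matrix_inv y) ** (phi2 y ** X) = X"
  by (simp add: matrix_mul_assoc phi2_mult[symmetric] matrix_inv_left phi2_one)

lemma phi1_mult_nth:
  "(phi1 y ** X) $ 2 $ j = y$2$1 * X$1$j + y$2$2 * X$2$j"
  "(phi1 y ** X) $ 3 $ j = X$3$j"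
  by (simp_all add: phi1_def matrix_matrix_mult_def sum_3)

lemma phi2_mult_nth:
  "(phi2 y ** X) $ 2 $ j = y$1$1 * X$2$j + y$1$2 * X$3$j"
  "(phi2 y ** X) $ 3 $ j = y$2$1 * X$2$j + y$2$2 * X$3$j"
  by (simp_all add: phi2_def matrix_matrix_mult_def sum_3)

section \<open>The Eisenstein integers\<close>

lemma omega_Re: "Re omega = -1/2"
  and omega_Im: "Im omega = sqrt 3 / 2"
  by (simp_all add: omega_def cos_120 sin_120)

lemma omega_squared: "omega * omega = -1 - omega"
  by (simp add: complex_eq_iff omega_Re omega_Im algebra_simps)

lemma eisI: "of_int a + of_int b * omega \<in> eis"
  unfolding eis_def by blast

lemma eisE:
  assumes "z \<in> eis"
  obtains a b :: int where "z = of_int a + of_int b * omega"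
  using assms unfolding eis_def by blast

lemma eis_0 [simp]: "0 \<in> eis"
  using eisI[of 0 0] by simp

lemma eis_1 [simp]: "1 \<in> eis"
  using eisI[of 1 0] by simp

lemma eis_3 [simp]: "3 \<in> eis"
  using eisI[of 3 0] by simp

lemma eis_add [simp]: "x \<in> eis \<Longrightarrow> y \<in> eis \<Longrightarrow> x + y \<in> eis"
proof -
  assume "x \<in> eis" "y \<in> eis"
  then obtain a b c d where "x = of_int a + of_int b * omega" "y = of_int c + of_int d * omega"
    by (metis eisE)
  then have "x + y = of_int (a + c) + of_int (b + d) * omega"
    by (simp add: algebra_simps)
  then show ?thesis by (metis eisI)
qed

lemma eis_uminus [simp]: "x \<in> eis \<Longrightarrow> - x \<in> eis"
proof -
  assume "x \<in> eis"
  then obtain a b where "x = of_int a + of_int b * omega"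
    by (metis eisE)
  then have "- x = of_int (- a) + of_int (- b) * omega"
    by (simp add: algebra_simps)
  then show ?thesis by (metis eisI)
qed

lemma eis_diff [simp]: "x \<in> eis \<Longrightarrow> y \<in> eis \<Longrightarrow> x - y \<in> eis"
  using eis_add[of x "- y"] by simp

lemma eis_mult [simp]: "x \<in> eis \<Longrightarrow> y \<in> eis \<Longrightarrow> x * y \<in> eis"
proof -
  assume "x \<in> eis" "y \<in> eis"
  then obtain a b c d where xy: "x = of_int a + of_int b * omega" "y = of_int c + of_int d * omega"
    by (metis eisE)
  have "x * y = of_int a * of_int c + (of_int a * of_int d + of_int b * of_int c) * omega
                + of_int b * of_int d * (omega * omega)"
    by (simp add: xy algebra_simps)
  also have "\<dots> = of_int (a*c - b*d) + of_int (a*d + b*c - b*d) * omega"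
    by (simp add: omega_squared algebra_simps)
  finally show ?thesis by (metis eisI)
qed

lemma eis_norm_square_nat: "z \<in> eis \<Longrightarrow> \<exists>n::nat. (cmod z)\<^sup>2 = real n"
proof -
  assume "z \<in> eis"
  then obtain a b where z: "z = of_int a + of_int b * omega" by (metis eisE)
  have "(cmod z)\<^sup>2 = (a - b/2)\<^sup>2 + (b * sqrt 3 / 2)\<^sup>2"
    by (simp add: cmod_power2 z omega_Re omega_Im)
  also have "\<dots> = of_int (a*a - a*b + b*b)"
    by (simp add: power2_eq_square algebra_simps)
  finally have norm: "(cmod z)\<^sup>2 = of_int (a*a - a*b + b*b)" .
  have "4 * (a*a - a*b + b*b) = (2*a - b)\<^sup>2 + 3*b\<^sup>2"
    by (simp add: power2_eq_square algebra_simps)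
  then have "a*a - a*b + b*b \<ge> 0"
    by (smt (verit) zero_le_power2)
  then show ?thesis using norm by (metis of_int_of_nat_eq of_nat_nat)
qed

text \<open>Round the coordinates of $z$ in the basis $1, \omega$; the error $\sigma + \tau\omega$ with
  $|\sigma|, |\tau| \le 1/2$ has norm $\sigma^2 - \sigma\tau + \tau^2 \le 3/4$.\<close>

lemma eis_nearest: "\<exists>q \<in> eis. cmod (z - q) < 1"
proof -
  define t where "t = Im z * 2 / sqrt 3"
  define s where "s = Re z + t / 2"
  define \<sigma> where "\<sigma> = s - round s"
  define \<tau> where "\<tau> = t - round t"
  have \<sigma>: "\<bar>\<sigma>\<bar> \<le> 1/2" and \<tau>: "\<bar>\<tau>\<bar> \<le> 1/2"
    unfolding \<sigma>_def \<tau>_def using of_int_round_abs_le by (simp_all add: abs_minus_commute)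
  let ?q = "of_int (round s) + of_int (round t) * omega"
  have re: "Re (z - ?q) = \<sigma> - \<tau>/2"
    by (simp add: omega_Re \<sigma>_def \<tau>_def s_def field_simps)
  have im: "Im (z - ?q) = \<tau> * sqrt 3 / 2"
    by (simp add: omega_Im \<tau>_def t_def algebra_simps)
  have "(cmod (z - ?q))\<^sup>2 = (\<sigma> - \<tau>/2)\<^sup>2 + (\<tau> * sqrt 3 / 2)\<^sup>2"
    unfolding cmod_power2 re im ..
  also have "\<dots> = \<sigma>\<^sup>2 - \<sigma>*\<tau> + \<tau>\<^sup>2"
    by (simp add: power2_eq_square algebra_simps)
  also have "\<dots> < 1"
  proof -
    have "\<sigma>\<^sup>2 \<le> (1/2)\<^sup>2" "\<tau>\<^sup>2 \<le> (1/2)\<^sup>2"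
      using \<sigma> \<tau> by (metis abs_ge_zero power2_abs power_mono)+
    moreover have "\<bar>\<sigma>*\<tau>\<bar> \<le> 1/2 * (1/2)"
      unfolding abs_mult using \<sigma> \<tau> by (intro mult_mono) auto
    ultimately show ?thesis by (simp add: power2_eq_square abs_le_iff)
  qed
  finally have "cmod (z - ?q) < 1" by (simp add: power_less_one_iff)
  then show ?thesis using eisI by blast
qed

lemma eis_division:
  assumes "p \<in> eis" "q \<in> eis" "q \<noteq> 0"
  shows "\<exists>k \<in> eis. cmod (p - k * q) < cmod q"
proof -
  obtain k where k: "k \<in> eis" "cmod (p / q - k) < 1"
    using eis_nearest by blast
  have "p - k * q = q * (p / q - k)"
    using assms(3) by (simp add: field_simps)
  then have "cmod (p - k * q) = cmod q * cmod (p / q - k)"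
    by (simp add: norm_mult)
  also have "\<dots> < cmod q"
    using k assms(3) by simp
  finally show ?thesis using k by blast
qed

text \<open>The Euclidean algorithm, run on $(p, q)$ and recorded as a matrix of determinant one.\<close>

lemma eis_unimodular_annihilator:
  assumes "p \<in> eis" "q \<in> eis"
  shows "\<exists>a\<in>eis. \<exists>b\<in>eis. \<exists>c\<in>eis. \<exists>d\<in>eis. a*d - b*c = 1 \<and> c*p + d*q = 0"
proof -
  obtain n :: nat where "(cmod q)\<^sup>2 = real n"
    using eis_norm_square_nat assms(2) by blast
  then show ?thesis
    using assms
  proof (induction n arbitrary: p q rule: less_induct)
    case (less n)
    show ?case
    proof (cases "q = 0")
      case True
      then show ?thesis by (intro bexI[of _ 1] bexI[of _ 0]) auto
    next
      case False
      obtain k where k: "k \<in> eis" "cmod (p - k * q) < cmod q"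
        using eis_division less.prems False by blast
      define r where "r = k * q - p"
      have r: "r \<in> eis"
        using less.prems k by (simp add: r_def)
      obtain m :: nat where m: "(cmod r)\<^sup>2 = real m"
        using eis_norm_square_nat r by blast
      have "(cmod r)\<^sup>2 < (cmod q)\<^sup>2"
        using k(2) by (simp add: r_def norm_minus_commute power_strict_mono)
      then have "m < n"
        using m less.prems(1) by simp
      then obtain a b c d where
        abcd: "a \<in> eis" "b \<in> eis" "c \<in> eis" "d \<in> eis" "a*d - b*c = 1" "c*q + d*r = 0"
        using less.IH m less.prems(3) r by blast
      have "(-b) * (c + d*k) - (a + b*k) * (-d) = a*d - b*c"
        by (simp add: algebra_simps)
      moreover have "(-d) * p + (c + d*k) * q = c*q + d*r"
        by (simp add: r_def algebra_simps)
      ultimately show ?thesis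
        using abcd k(1)
        by (intro bexI[of _ "-b"] bexI[of _ "a + b*k"] bexI[of _ "-d"] bexI[of _ "c + d*k"]) auto
    qed
  qed
qed

lemma eis_mod3_decomp: "z \<in> eis \<Longrightarrow> \<exists>s \<in> small_eis. \<exists>k \<in> eis. z = s + 3 * k"
proof -
  assume "z \<in> eis"
  then obtain a b where z: "z = of_int a + of_int b * omega" by (metis eisE)
  let ?s = "of_int (a mod 3) + of_int (b mod 3) * omega"
  let ?k = "of_int (a div 3) + of_int (b div 3) * omega"
  have "?s \<in> small_eis"
    unfolding small_eis_def by (intro CollectI exI[of _ "a mod 3"] exI[of _ "b mod 3"]) auto
  moreover have "z = ?s + 3 * ?k"
  proof -
    have "(of_int a :: complex) = of_int (a mod 3) + 3 * of_int (a div 3)"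
      and "(of_int b :: complex) = of_int (b mod 3) + 3 * of_int (b div 3)"
      by (metis mod_mult_div_eq of_int_add of_int_mult of_int_numeral)+
    then show ?thesis unfolding z by (simp add: algebra_simps)
  qed
  ultimately show ?thesis using eisI by blast
qed

section \<open>Clearing a column with elements of $Y(\mathfrak{o})$\<close>

lemma SL2_eis_invertible: "y \<in> SL2_eis \<Longrightarrow> invertible y"
  unfolding SL2_eis_def by (simp add: invertible_det_nz)

lemma Yset_subset_SL2_eis: "Yset R S \<subseteq> SL2_eis"
  unfolding Yset_def SL2_eis_def by auto (simp add: mat_def)

text \<open>A bottom row $(c, d)$ of a matrix in $SL_2(\mathfrak{o})$ with $c \neq 0$ is, up to a unit,
  the bottom row of an element of $Y(\mathfrak{o})$: scale $c$ to its representative and move the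
  top-left entry into the chosen residue system modulo it.\<close>

lemma Yset_bottom_row_up_to_unit:
  assumes R: "unit_reps R" and S: "\<And>c. c \<in> eis - {0} \<Longrightarrow> residue_reps c (S c)"
    and abcd: "a \<in> eis" "b \<in> eis" "c \<in> eis" "d \<in> eis" "a*d - b*c = 1" and "c \<noteq> 0"
  obtains y v where "y \<in> Yset R S" "y$2$1 = v * c" "y$2$2 = v * d"
proof -
  obtain r u where r: "r \<in> R" and u: "u \<in> eis_units" and cu: "c = u * r"
    using R abcd(3) \<open>c \<noteq> 0\<close> unfolding unit_reps_def by blast
  have rE: "r \<in> eis" "r \<noteq> 0"
    using R r unfolding unit_reps_def by auto
  obtain v where v: "v \<in> eis" "u * v = 1" and uE: "u \<in> eis"
    using u unfolding eis_units_def by blast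
  have rv: "r = v * c"
    using cu v(2) by (metis mult.assoc mult.commute mult_1_right)
  have "residue_reps r (S r)"
    using S rE by blast
  then obtain s k where s: "s \<in> S r" "s \<in> eis" and k: "k \<in> eis" "a * u - s = r * k"
    using abcd(1) uE unfolding residue_reps_def by (meson eis_mult subsetD)
  define y where "y = mat2 s (b * u - k * d * v) r (v * d)"
  have s_eq: "s = a * u - r*k"
    using k(2) by (simp add: algebra_simps)
  have "s * (v * d) - (b * u - k * d * v) * r = (a*d - b*c) * (u * v)"
    by (simp add: s_eq rv algebra_simps)
  then have "det y = 1"
    using abcd(5) v(2) by (simp add: y_def det_2)
  moreover have "\<forall>i j. y$i$j \<in> eis"
    using s(2) abcd k(1) v(1) uE rE(1) by (simp add: y_def forall_2)
  ultimately have "y \<in> SL2_eis"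
    unfolding SL2_eis_def by blast
  then have "y \<in> Yset R S"
    unfolding Yset_def y_def using r s(1) by blast
  then show ?thesis
    using that[of y v] by (simp add: y_def rv)
qed

lemma Yset_annihilates:
  assumes R: "unit_reps R" and S: "\<And>c. c \<in> eis - {0} \<Longrightarrow> residue_reps c (S c)"
    and "p \<in> eis" "q \<in> eis"
  obtains y where "y \<in> Yset R S" "y$2$1 * p + y$2$2 * q = 0"
proof (cases "q = 0")
  case True
  have "mat 1 \<in> Yset R S"
    unfolding Yset_def by blast
  then show ?thesis
    using that True by (simp add: mat_def)
next
  case False
  obtain a b c d where abcd: "a\<in>eis" "b\<in>eis" "c\<in>eis" "d\<in>eis" "a*d - b*c = 1" "c*p + d*q = 0"
    using eis_unimodular_annihilator assms(3,4) by blast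
  have "c \<noteq> 0"
    using abcd(5,6) False by auto
  then obtain y v where y: "y \<in> Yset R S" "y$2$1 = v * c" "y$2$2 = v * d"
    using Yset_bottom_row_up_to_unit[OF R S abcd(1-5)] by blast
  then have "y$2$1 * p + y$2$2 * q = v * (c*p + d*q)"
    by (simp add: algebra_simps)
  then show ?thesis
    using that y(1) abcd(6) by simp
qed

section \<open>Triangularisation in $SL_3(\mathfrak{o})$\<close>

definition upper_triangular3 :: "complex^3^3 \<Rightarrow> bool" where
  "upper_triangular3 M \<longleftrightarrow> M$2$1 = 0 \<and> M$3$1 = 0 \<and> M$3$2 = 0"

lemma SL3_eis_nth: "X \<in> SL3_eis \<Longrightarrow> X$i$j \<in> eis"
  unfolding SL3_eis_def by auto

lemma SL3_eis_mult: "X \<in> SL3_eis \<Longrightarrow> Y \<in> SL3_eis \<Longrightarrow> X ** Y \<in> SL3_eis"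
  unfolding SL3_eis_def by (simp add: det_mul) (simp add: matrix_matrix_mult_def sum_3)

lemma phi1_SL3_eis: "y \<in> SL2_eis \<Longrightarrow> phi1 y \<in> SL3_eis"
  unfolding SL2_eis_def SL3_eis_def by (simp add: phi1_def forall_3 det_mat3 det_2 algebra_simps)

lemma phi2_SL3_eis: "y \<in> SL2_eis \<Longrightarrow> phi2 y \<in> SL3_eis"
  unfolding SL2_eis_def SL3_eis_def by (simp add: phi2_def forall_3 det_mat3 det_2 algebra_simps)

lemma SL3_eis_upper_triangularize:
  assumes R: "unit_reps R" and S: "\<And>c. c \<in> eis - {0} \<Longrightarrow> residue_reps c (S c)"
    and A: "A \<in> SL3_eis"
  obtains y1 y2 y3 where "y1 \<in> Yset R S" "y2 \<in> Yset R S" "y3 \<in> Yset R S"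
    and "phi2 y3 ** (phi1 y2 ** (phi2 y1 ** A)) \<in> SL3_eis"
    and "upper_triangular3 (phi2 y3 ** (phi1 y2 ** (phi2 y1 ** A)))"
proof -
  note SL3_phi = SL3_eis_mult[OF phi1_SL3_eis] SL3_eis_mult[OF phi2_SL3_eis]
    and Y = Yset_subset_SL2_eis[THEN subsetD]
  obtain y1 where y1: "y1 \<in> Yset R S" "y1$2$1 * A$2$1 + y1$2$2 * A$3$1 = 0"
    using Yset_annihilates[OF R S] SL3_eis_nth[OF A] by metis
  define A1 where "A1 = phi2 y1 ** A"
  have A1: "A1 \<in> SL3_eis" "A1$3$1 = 0"
    using y1 A by (simp_all add: A1_def SL3_phi Y phi2_mult_nth)
  obtain y2 where y2: "y2 \<in> Yset R S" "y2$2$1 * A1$1$1 + y2$2$2 * A1$2$1 = 0"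
    using Yset_annihilates[OF R S] SL3_eis_nth[OF A1(1)] by metis
  define A2 where "A2 = phi1 y2 ** A1"
  have A2: "A2 \<in> SL3_eis" "A2$2$1 = 0" "A2$3$1 = 0"
    using y2 A1 by (simp_all add: A2_def SL3_phi Y phi1_mult_nth)
  obtain y3 where y3: "y3 \<in> Yset R S" "y3$2$1 * A2$2$2 + y3$2$2 * A2$3$2 = 0"
    using Yset_annihilates[OF R S] SL3_eis_nth[OF A2(1)] by metis
  have "phi2 y3 ** A2 \<in> SL3_eis" "upper_triangular3 (phi2 y3 ** A2)"
    using y3 A2 by (simp_all add: SL3_phi Y upper_triangular3_def phi2_mult_nth)
  then show ?thesis
    using that y1(1) y2(1) y3(1) by (simp add: A1_def A2_def)
qed

section \<open>Upper triangular matrices: $D(3)\,U(3)\,\Gamma_\infty(3)\<close>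

text \<open>Reduce the $(1,2)$ and $(2,3)$ entries modulo 3 first; the $(1,3)$ entry of the product then
  picks up the cross term $3\alpha s$, which is absorbed before reducing it.\<close>

lemma unipotent_U3_Gamma_inf3_decomp:
  assumes "x \<in> eis" "y \<in> eis" "z \<in> eis"
  shows "\<exists>u \<in> U3. \<exists>C \<in> Gamma_inf3. mat3 1 x y 0 1 z 0 0 1 = u ** C"
proof -
  obtain \<alpha> p where \<alpha>: "\<alpha> \<in> small_eis" "p \<in> eis" "x = \<alpha> + 3 * p"
    using eis_mod3_decomp assms(1) by blast
  obtain \<gamma> s where \<gamma>: "\<gamma> \<in> small_eis" "s \<in> eis" "z = \<gamma> + 3 * s"
    using eis_mod3_decomp assms(3) by blast
  have "\<alpha> \<in> eis"
    using \<alpha>(1) unfolding small_eis_def eis_def by blast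
  then obtain \<beta> r where \<beta>: "\<beta> \<in> small_eis" "r \<in> eis" "y - 3 * \<alpha> * s = \<beta> + 3 * r"
    using eis_mod3_decomp[of "y - 3 * \<alpha> * s"] assms(2) \<gamma>(2) by auto
  define C where "C = mat3 1 (3 * p) (3 * r) 0 1 (3 * s) 0 0 1"
  have "C \<in> SL3_eis"
    unfolding SL3_eis_def C_def using \<alpha>(2) \<beta>(2) \<gamma>(2) by (simp add: forall_3 det_mat3)
  moreover have "\<forall>i j. \<exists>k \<in> eis. C$i$j - (mat 1 :: complex^3^3)$i$j = 3 * k"
    using \<alpha>(2) \<beta>(2) \<gamma>(2) eis_0 by (simp add: C_def mat_def forall_3)
  ultimately have "C \<in> Gamma_inf3"
    unfolding Gamma_inf3_def Gamma3_def C_def by blast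
  moreover have "mat3 1 \<alpha> \<beta> 0 1 \<gamma> 0 0 1 \<in> U3"
    unfolding U3_def using \<alpha>(1) \<beta>(1) \<gamma>(1) by blast
  moreover have "mat3 1 x y 0 1 z 0 0 1 = mat3 1 \<alpha> \<beta> 0 1 \<gamma> 0 0 1 ** C"
    using \<alpha>(3) \<beta>(3) \<gamma>(3) by (simp add: C_def mat3_mult mat3_eq_iff algebra_simps)
  ultimately show ?thesis by blast
qed

text \<open>Since $m_{11} m_{22} m_{33} = 1$, dividing row $i$ by $m_{ii}$ amounts to multiplying it by the
  other two diagonal entries, so the unipotent cofactor has entries in $\mathfrak{o}$.\<close>

lemma upper_triangular_SL3_eis_decomp:
  assumes M: "M \<in> SL3_eis" and "upper_triangular3 M"
  shows "\<exists>d \<in> D3. \<exists>u \<in> U3. \<exists>C \<in> Gamma_inf3. M = d ** u ** C"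
proof -
  have M_eq: "M = mat3 (M$1$1) (M$1$2) (M$1$3) 0 (M$2$2) (M$2$3) 0 0 (M$3$3)"
    using \<open>upper_triangular3 M\<close> unfolding upper_triangular3_def by (subst mat3_eta) simp
  have det: "M$1$1 * M$2$2 * M$3$3 = 1"
    using M unfolding SL3_eis_def by (subst (asm) M_eq) (simp add: det_mat3)
  note E = SL3_eis_nth[OF M]
  define d where "d = mat3 (M$1$1) 0 0 0 (M$2$2) 0 0 0 (M$3$3)"
  obtain u C where u: "u \<in> U3" and C: "C \<in> Gamma_inf3"
    and uC: "mat3 1 (M$1$2 * M$2$2 * M$3$3) (M$1$3 * M$2$2 * M$3$3)
                  0 1 (M$2$3 * M$1$1 * M$3$3) 0 0 1 = u ** C"
    using unipotent_U3_Gamma_inf3_decomp E by (metis eis_mult)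
  have "d \<in> D3"
    unfolding D3_def d_def using E det by blast
  moreover have "M = d ** (u ** C)"
    unfolding uC[symmetric] d_def using det
    by (subst M_eq) (simp add: mat3_mult mat3_eq_iff algebra_simps)
  ultimately show ?thesis
    using u C by (auto simp: matrix_mul_assoc)
qed

theorem theorem2p10:
  fixes R :: "complex set" and S :: "complex \<Rightarrow> complex set" and A :: "complex^3^3"
  assumes "unit_reps R"
    and "\<And>c. c \<in> eis - {0} \<Longrightarrow> residue_reps c (S c)"
    and "A \<in> SL3_eis"
  shows "\<exists>y1 \<in> Yset R S. \<exists>y2 \<in> Yset R S. \<exists>y3 \<in> Yset R S. \<exists>d \<in> D3. \<exists>u \<in> U3. \<exists>C \<in> Gamma_inf3.
           A = phi2 (matrix_inv y1) ** phi1 (matrix_inv y2) ** phi2 (matrix_inv y3) ** d ** u ** C"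
proof -
  obtain y1 y2 y3 where y: "y1 \<in> Yset R S" "y2 \<in> Yset R S" "y3 \<in> Yset R S"
    and M: "phi2 y3 ** (phi1 y2 ** (phi2 y1 ** A)) \<in> SL3_eis"
           "upper_triangular3 (phi2 y3 ** (phi1 y2 ** (phi2 y1 ** A)))"
    using SL3_eis_upper_triangularize assms by blast
  obtain d u C where duC: "d \<in> D3" "u \<in> U3" "C \<in> Gamma_inf3"
    and M_eq: "phi2 y3 ** (phi1 y2 ** (phi2 y1 ** A)) = d ** u ** C"
    using upper_triangular_SL3_eis_decomp[OF M] by blast
  have "invertible y1" "invertible y2" "invertible y3"
    using y Yset_subset_SL2_eis SL2_eis_invertible by blast+
  then have "A = phi2 (matrix_inv y1) ** (phi1 (matrix_inv y2) **
                   (phi2 (matrix_inv y3) ** (phi2 y3 ** (phi1 y2 ** (phi2 y1 ** A)))))"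
    by (simp add: phi1_matrix_inv_cancel phi2_matrix_inv_cancel)
  also have "\<dots> = phi2 (matrix_inv y1) ** phi1 (matrix_inv y2) ** phi2 (matrix_inv y3) ** d ** u ** C"
    unfolding M_eq by (simp add: matrix_mul_assoc)
  finally show ?thesis
    using y duC by blast
qed

end
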